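(* Let $\mathcal N=\mathbb N^*$, $\Omega=\{x,y\}$, and $U\in\mathbb Q^{\underline\Omega}$ the mould with $U^x=1$, $U^{x^pyx^q}=\frac{(-1)^q}{p!q!}$ ($p,q\in\mathbb N$), $U^{\underline\omega}=0$ otherwise. For $M\in\mathbb Q^{\underline{\mathcal N}}$ define $M\odot U\in\mathbb Q^{\underline\Omega}$ by $(M\odot U)^\emptyset=M^\emptyset$ and, for nonempty $\underline\omega$, $$(M\odot U)^{\underline\omega}=\sum_{s\ge1}\ \sum_{\substack{\underline\omega=\underline\omega^1\cdots\underline\omega^s\\ \underline\omega^1,\dots,\underline\omega^s\ne\emptyset}}M^{r(\underline\omega^1)\cdots r(\underline\omega^s)}U^{\underline\omega^1}\cdots U^{\underline\omega^s},$$ where $r(\underline\omega^1)\cdots r(\underline\omega^s)$ is read as a word of length $s$ over $\mathcal N$. Then for any unital associative algebra $\mathbb A$ over a field of characteristic zero, any $X,Y\in\mathbb A$, and any $M\in\mathbb Q^{\underline{\mathcal N}}$, $$MD=(M\odot U)B,$$ where $D$ is the associative comould generated by $D_n=\frac{t^n}{(n-1)!}\mathrm{ad}_X^{n-1}(X+Y)$ ($n\in\mathcal N$) and $B$ is the associative comould generated by $B_x=tX$, $B_y=tY$.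
   Context: For an alphabet $\mathcal M$, $\underline{\mathcal M}$ is its set of finite words (empty word $\emptyset$, length $r(\cdot)$); a mould is a function $\underline{\mathcal M}\to\mathbb Q$. For a family $(C_m)_{m\in\mathcal M}$ in $\mathbb A[[t]]$, the associative comould is $C_\emptyset=1$, $C_{m_1\cdots m_r}=C_{m_1}\cdots C_{m_r}$, and $MC=\sum_{\underline m}M^{\underline m}C_{\underline m}$ ($t$-adically convergent here). $\mathrm{ad}_AB=AB-BA$. *)

theory Defs
  imports "HOL-Computational_Algebra.Formal_Power_Series"
begin

definition is_algebra :: "('k::field \<Rightarrow> 'a::ring_1 \<Rightarrow> 'a) \<Rightarrow> bool" where
  "is_algebra sc \<longleftrightarrow>
     (\<forall>a x y. sc a (x + y) = sc a x + sc a y) \<and>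
     (\<forall>a b x. sc (a + b) x = sc a x + sc b x) \<and>
     (\<forall>a b x. sc (a * b) x = sc a (sc b x)) \<and>
     (\<forall>x. sc 1 x = x) \<and>
     (\<forall>a x y. sc a (x * y) = sc a x * y) \<and>
     (\<forall>a x y. sc a (x * y) = x * sc a y)"

definition ad :: "'a::ring \<Rightarrow> 'a \<Rightarrow> 'a" where
  "ad A B = A * B - B * A"

definition comould :: "('m \<Rightarrow> 'a::ring_1 fps) \<Rightarrow> 'm list \<Rightarrow> 'a fps" where
  "comould C w = prod_list (map C w)"

(* t-adic sum of a family of power series (coefficientwise; each coefficient
   has finite support in the situations considered) *)
definition fps_tsum :: "('w \<Rightarrow> 'a::comm_monoid_add fps) \<Rightarrow> 'w set \<Rightarrow> 'a fps" where
  "fps_tsum F W = Abs_fps (\<lambda>n. \<Sum>w \<in> {w \<in> W. fps_nth (F w) n \<noteq> 0}. fps_nth (F w) n)"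

definition mould_apply ::
  "('k::field_char_0 \<Rightarrow> 'a::ring_1 \<Rightarrow> 'a) \<Rightarrow> ('m list \<Rightarrow> rat) \<Rightarrow> ('m \<Rightarrow> 'a fps) \<Rightarrow> 'm list set \<Rightarrow> 'a fps" where
  "mould_apply sc M C W = fps_tsum (\<lambda>w. Abs_fps (\<lambda>n. sc (of_rat (M w)) (fps_nth (comould C w) n))) W"

datatype omega = ox | oy

definition U :: "omega list \<Rightarrow> rat" where
  "U w = (if w = [ox] then 1
          else if (\<exists>p q. w = replicate p ox @ [oy] @ replicate q ox)
          then (THE r. \<exists>p q. w = replicate p ox @ [oy] @ replicate q ox \<and>
                              r = (-1) ^ q / (fact p * fact q))
          else 0)"

(* M \<odot> U, words over N* encoded as nat lists *)
definition odot :: "(nat list \<Rightarrow> rat) \<Rightarrow> (omega list \<Rightarrow> rat) \<Rightarrow> omega list \<Rightarrow> rat" where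
  "odot M V w = (if w = [] then M []
     else (\<Sum>ws \<in> {ws. concat ws = w \<and> (\<forall>v \<in> set ws. v \<noteq> [])}.
             M (map length ws) * prod_list (map V ws)))"

definition Dgen :: "('k::field_char_0 \<Rightarrow> 'a::ring_1 \<Rightarrow> 'a) \<Rightarrow> 'a \<Rightarrow> 'a \<Rightarrow> nat \<Rightarrow> 'a fps" where
  "Dgen sc X Y n = fps_const (sc (of_rat (1 / fact (n - 1))) ((ad X ^^ (n - 1)) (X + Y))) * fps_X ^ n"

definition Bgen :: "'a::ring_1 \<Rightarrow> 'a \<Rightarrow> omega \<Rightarrow> 'a fps" where
  "Bgen X Y c = (case c of ox \<Rightarrow> fps_const X * fps_X | oy \<Rightarrow> fps_const Y * fps_X)"

end

theory Submission
  imports Defs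
begin

text \<open>
  The coefficient of \<open>t\<^sup>n\<close> on either side is a finite sum. Splitting off the first part
  \<open>k\<close> of a composition of \<open>n\<close> on the left, and the first factor (of length \<open>k\<close>) of a
  factorization of a word on the right, shows that both coefficient families satisfy the same
  recursion in \<open>(M, n)\<close>, provided the degree-\<open>k\<close> part of \<open>U B\<close> equals \<open>D\<^sub>k\<close>. For \<open>k = 1\<close> this
  part is \<open>X + Y\<close>; for \<open>k = m + 1 > 1\<close> only the words \<open>x\<^sup>p y x\<^sup>q\<close> with \<open>p + q = m\<close> contribute,
  and their weights \<open>(-1)\<^sup>q / (p! q!)\<close> are the coefficients of the binomial expansion of
  \<open>ad\<^sub>X\<^sup>m Y\<close> divided by \<open>m!\<close>, while \<open>ad\<^sub>X\<^sup>m X = 0\<close>.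
\<close>

locale scalar_algebra =
  fixes sc :: "'k::field_char_0 \<Rightarrow> 'a::ring_1 \<Rightarrow> 'a"
  assumes is_algebra: "is_algebra sc"
begin

lemma scale_add_right: "sc a (x + y) = sc a x + sc a y"
  and scale_add_left: "sc (a + b) x = sc a x + sc b x"
  and scale_scale: "sc (a * b) x = sc a (sc b x)"
  and scale_one: "sc 1 x = x"
  and scale_mult_left: "sc a (x * y) = sc a x * y"
  and scale_mult_right: "sc a (x * y) = x * sc a y"
  using is_algebra unfolding is_algebra_def by blast+

lemma scale_zero_right [simp]: "sc a 0 = 0"
  using scale_add_right[of a 0 0] by simp

lemma scale_zero_left [simp]: "sc 0 x = 0"
  using scale_add_left[of 0 0 x] by simp

lemma scale_sum_right: "sc a (sum f A) = (\<Sum>i\<in>A. sc a (f i))"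
  by (induction A rule: infinite_finite_induct) (auto simp: scale_add_right)

lemma scale_sum_left: "sc (sum f A) x = (\<Sum>i\<in>A. sc (f i) x)"
  by (induction A rule: infinite_finite_induct) (auto simp: scale_add_left)

lemma scale_minus_left: "sc (- a) x = - sc a x"
  using scale_add_left[of a "- a" x] by (simp add: eq_neg_iff_add_eq_0 add.commute)

lemma scale_of_nat: "sc (of_nat n) x = of_nat n * x"
  by (induction n) (auto simp: scale_add_left scale_one algebra_simps)

lemma scale_of_int: "sc (of_int i) x = of_int i * x"
  by (cases i rule: int_cases) (simp_all add: scale_minus_left scale_of_nat del: of_nat_Suc)

lemma scale_mult_mult: "sc (a * b) (x * y) = sc a x * sc b y"
  by (simp only: scale_scale scale_mult_right[of b x y] scale_mult_left[of a x])

end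

lemma ad_iterate_add: "(ad X ^^ m) (a + b) = (ad X ^^ m) a + (ad X ^^ m) (b::'a::ring)"
  by (induction m) (auto simp: ad_def algebra_simps)

lemma ad_iterate_self:
  assumes "m \<ge> 1" shows "(ad X ^^ m) (X::'a::ring) = 0"
proof -
  have "(ad X ^^ k) 0 = 0" for k by (induction k) (auto simp: ad_def)
  with assms show ?thesis
    by (cases m) (auto simp: funpow_Suc_right ad_def simp del: funpow.simps)
qed

lemma signed_pascal_sum:
  fixes f :: "nat \<Rightarrow> 'a::ring_1"
  defines "c m p \<equiv> of_int ((-1)^(m-p) * int (m choose p)) :: 'a"
  shows "(\<Sum>p\<le>Suc m. c (Suc m) p * f p)
       = (\<Sum>p\<le>m. c m p * f (Suc p)) - (\<Sum>p\<le>m. c m p * f p)"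
proof -
  have pascal: "c (Suc m) (Suc p) = c m p - c m (Suc p)" if "p \<le> m" for p
  proof (cases "p = m")
    case False
    with that obtain r where "m - p = Suc r" "m - Suc p = r"
      by (metis Suc_diff_Suc diff_Suc_1 le_neq_implies_less)
    then show ?thesis by (simp add: c_def algebra_simps)
  qed (simp add: c_def binomial_eq_0)
  have "(\<Sum>p\<le>m. c m p * f p) = (\<Sum>p\<le>Suc m. c m p * f p)"
    by (simp add: c_def binomial_eq_0)
  also have "\<dots> = c m 0 * f 0 + (\<Sum>p\<le>m. c m (Suc p) * f (Suc p))"
    by (rule sum.atMost_Suc_shift)
  finally have shifted: "(\<Sum>p\<le>m. c m p * f p) = c m 0 * f 0 + (\<Sum>p\<le>m. c m (Suc p) * f (Suc p))" .
  have "(\<Sum>p\<le>Suc m. c (Suc m) p * f p) = c (Suc m) 0 * f 0 + (\<Sum>p\<le>m. c (Suc m) (Suc p) * f (Suc p))"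
    by (rule sum.atMost_Suc_shift)
  also have "\<dots> = - c m 0 * f 0 + ((\<Sum>p\<le>m. c m p * f (Suc p)) - (\<Sum>p\<le>m. c m (Suc p) * f (Suc p)))"
    using pascal by (simp add: c_def left_diff_distrib flip: sum_subtractf)
  finally show ?thesis unfolding shifted by (simp add: algebra_simps)
qed

lemma ad_iterate_expansion:
  fixes X Y :: "'a::ring_1"
  shows "(ad X ^^ m) Y = (\<Sum>p\<le>m. of_int ((-1)^(m-p) * int (m choose p)) * (X^p * Y * X^(m-p)))"
proof (induction m)
  case (Suc m)
  define c where "c m p = (of_int ((-1)^(m-p) * int (m choose p)) :: 'a)" for m p
  have "(ad X ^^ Suc m) Y = X * (\<Sum>p\<le>m. c m p * (X^p * Y * X^(m-p)))
                         - (\<Sum>p\<le>m. c m p * (X^p * Y * X^(m-p))) * X"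
    by (simp only: funpow.simps comp_def Suc.IH ad_def c_def)
  also have "\<dots> = (\<Sum>p\<le>m. c m p * (X^Suc p * Y * X^(Suc m - Suc p)))
                 - (\<Sum>p\<le>m. c m p * (X^p * Y * X^(Suc m - p)))"
    unfolding sum_distrib_left sum_distrib_right
  proof (intro arg_cong2[where f = minus] sum.cong refl)
    fix p assume "p \<in> {..m}"
    then have p: "p \<le> m" by simp
    show "X * (c m p * (X^p * Y * X^(m-p))) = c m p * (X^Suc p * Y * X^(Suc m - Suc p))"
      by (simp only: c_def mult_of_int_commute mult.assoc[symmetric])
        (simp only: diff_Suc_Suc power_Suc mult.assoc)
    show "c m p * (X^p * Y * X^(m-p)) * X = c m p * (X^p * Y * X^(Suc m - p))"
      by (simp only: Suc_diff_le[OF p] power_Suc2 mult.assoc)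
  qed
  also have "\<dots> = (\<Sum>p\<le>Suc m. c (Suc m) p * (X^p * Y * X^(Suc m - p)))"
    unfolding c_def by (rule signed_pascal_sum[symmetric])
  finally show ?case by (simp add: c_def)
qed simp

definition factorizations :: "'a list \<Rightarrow> 'a list list set" where
  "factorizations w = {ws. concat ws = w \<and> (\<forall>v\<in>set ws. v \<noteq> [])}"

lemma factorizations_Nil: "factorizations [] = {[]}"
  unfolding factorizations_def by auto

lemma bij_betw_factorizations_first:
  assumes "w \<noteq> []"
  shows "bij_betw (\<lambda>(k, ws). take k w # ws)
           (SIGMA k:{1..length w}. factorizations (drop k w)) (factorizations w)"
proof (rule bij_betw_byWitness[where f' = "\<lambda>ws. (length (hd ws), tl ws)"])
  have split: "\<exists>v r. ws = v # r \<and> v \<noteq> [] \<and> w = v @ concat r \<and> r \<in> factorizations (concat r)"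
    if "ws \<in> factorizations w" for ws
    using that assms by (cases ws) (auto simp: factorizations_def)
  show "\<forall>ws\<in>factorizations w. (\<lambda>(k, ws). take k w # ws) (length (hd ws), tl ws) = ws"
    using split by fastforce
  show "(\<lambda>ws. (length (hd ws), tl ws)) ` factorizations w
          \<subseteq> (SIGMA k:{1..length w}. factorizations (drop k w))"
    using split by (fastforce simp: Suc_le_eq)
  show "(\<lambda>(k, ws). take k w # ws) ` (SIGMA k:{1..length w}. factorizations (drop k w))
          \<subseteq> factorizations w"
    using assms by (auto simp: factorizations_def)
qed (auto simp: factorizations_def)

lemma finite_factorizations: "finite (factorizations w)"
proof (induction w rule: length_induct)
  case (1 w)
  show ?case
  proof (cases "w = []")
    case False
    have "finite (SIGMA k:{1..length w}. factorizations (drop k w))"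
      using False "1.IH" by (intro finite_SigmaI) auto
    then show ?thesis
      using bij_betw_finite[OF bij_betw_factorizations_first[OF False]] by simp
  qed (simp add: factorizations_Nil)
qed

lemma odot_eq_sum_factorizations:
  "odot M V w = (\<Sum>ws\<in>factorizations w. M (map length ws) * prod_list (map V ws))"
  by (simp add: odot_def factorizations_Nil flip: factorizations_def)

lemma odot_first_factor:
  assumes "w \<noteq> []"
  shows "odot M V w = (\<Sum>k\<in>{1..length w}. V (take k w) * odot (\<lambda>v. M (k # v)) V (drop k w))"
proof -
  have "odot M V w = (\<Sum>(k, ws)\<in>(SIGMA k:{1..length w}. factorizations (drop k w)).
          M (map length (take k w # ws)) * prod_list (map V (take k w # ws)))"
    unfolding odot_eq_sum_factorizations
      sum.reindex_bij_betw[OF bij_betw_factorizations_first[OF assms], symmetric]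
    by (simp add: case_prod_beta)
  also have "\<dots> = (\<Sum>(k, ws)\<in>(SIGMA k:{1..length w}. factorizations (drop k w)).
          V (take k w) * (M (k # map length ws) * prod_list (map V ws)))"
    by (rule sum.cong) (auto simp: mult.left_commute)
  also have "\<dots> = (\<Sum>k\<in>{1..length w}. V (take k w) * odot (\<lambda>v. M (k # v)) V (drop k w))"
    by (simp add: sum.Sigma[symmetric] finite_factorizations odot_eq_sum_factorizations
        sum_distrib_left)
  finally show ?thesis .
qed

definition compositions :: "nat \<Rightarrow> nat list set" where
  "compositions n = {w \<in> lists {1..}. sum_list w = n}"

lemma compositions_0: "compositions 0 = {[]}"
proof -
  have "w = []" if "w \<in> lists {1..}" "sum_list w = 0" for w :: "nat list"
    using that by (cases w) auto
  then show ?thesis by (auto simp: compositions_def)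
qed

lemma bij_betw_compositions_first:
  assumes "n > 0"
  shows "bij_betw (\<lambda>(k, w). k # w) (SIGMA k:{1..n}. compositions (n - k)) (compositions n)"
proof (rule bij_betw_byWitness[where f' = "\<lambda>w. (hd w, tl w)"])
  have first: "\<exists>k r. w = k # r" if "w \<in> compositions n" for w
    using that assms by (cases w) (auto simp: compositions_def)
  then show "\<forall>w\<in>compositions n. (\<lambda>(k, w). k # w) (hd w, tl w) = w"
    by fastforce
  show "(\<lambda>w. (hd w, tl w)) ` compositions n \<subseteq> (SIGMA k:{1..n}. compositions (n - k))"
    using first by (fastforce simp: compositions_def)
qed (auto simp: compositions_def)

lemma finite_compositions: "finite (compositions n)"
proof (induction n rule: less_induct)
  case (less n)
  show ?case
  proof (cases "n = 0")
    case False
    have "finite (SIGMA k:{1..n}. compositions (n - k))"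
      using False less.IH by (intro finite_SigmaI) auto
    then show ?thesis
      using bij_betw_finite[OF bij_betw_compositions_first] False by blast
  qed (simp add: compositions_0)
qed

lemma sum_words_split:
  assumes "k \<le> n"
  shows "(\<Sum>u | length u = n. f (take k u) (drop k u))
       = (\<Sum>x | length x = k. \<Sum>y | length y = n - k. f x y)"
proof -
  have "bij_betw (\<lambda>(x, y). x @ y) ({x. length x = k} \<times> {y. length y = n - k}) {u. length u = n}"
    using assms by (intro bij_betw_byWitness[where f' = "\<lambda>u. (take k u, drop k u)"]) auto
  then have "(\<Sum>u | length u = n. f (take k u) (drop k u))
      = (\<Sum>p\<in>{x. length x = k} \<times> {y. length y = n - k}.
           (\<lambda>u. f (take k u) (drop k u)) ((\<lambda>(x, y). x @ y) p))"
    by (rule sum.reindex_bij_betw[symmetric])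
  also have "\<dots> = (\<Sum>(x, y)\<in>{x. length x = k} \<times> {y. length y = n - k}. f x y)"
    by (rule sum.cong) auto
  finally show ?thesis
    by (simp add: sum.cartesian_product)
qed

instance omega :: finite
proof
  have "UNIV = {ox, oy}" by (auto intro: omega.exhaust)
  then show "finite (UNIV :: omega set)" by (metis finite.emptyI finite_insert)
qed

lemma finite_words_length: "finite {u :: 'a::finite list. length u = k}"
  using finite_lists_length_eq[of "UNIV :: 'a set" k] by simp

lemma replicate_oy_replicate_inj:
  assumes "replicate p ox @ oy # replicate q ox = replicate p' ox @ oy # replicate q' ox"
  shows "p = p' \<and> q = q'"
proof -
  have tw: "takeWhile (\<lambda>c. c = ox) (replicate p ox @ oy # r) = replicate p ox" for p r
    by (induction p) simp_all
  have "p = p'"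
    using arg_cong[OF assms, of "\<lambda>u. length (takeWhile (\<lambda>c. c = ox) u)"] by (simp add: tw)
  moreover have "p + q = p' + q'"
    using arg_cong[OF assms, of length] by simp
  ultimately show ?thesis by simp
qed

lemma U_x: "U [ox] = 1"
  by (simp add: U_def)

lemma U_x_power_y_x_power: "U (replicate p ox @ [oy] @ replicate q ox) = (-1)^q / (fact p * fact q)"
proof -
  let ?w = "replicate p ox @ [oy] @ replicate q ox"
  have "?w \<noteq> [ox]"
  proof
    assume "?w = [ox]"
    moreover have "oy \<in> set ?w" by simp
    ultimately show False by simp
  qed
  moreover have "\<exists>p' q'. ?w = replicate p' ox @ [oy] @ replicate q' ox"
    by blast
  moreover have "(THE r. \<exists>p' q'. ?w = replicate p' ox @ [oy] @ replicate q' ox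
                        \<and> r = (-1) ^ q' / (fact p' * fact q')) = (-1)^q / (fact p * fact q)"
    by (rule the_equality) (auto dest: replicate_oy_replicate_inj)
  ultimately show ?thesis by (simp add: U_def)
qed

lemma U_y: "U [oy] = 1"
  using U_x_power_y_x_power[of 0 0] by simp

lemma U_eq_0:
  assumes "w \<noteq> [ox]" "\<nexists>p q. w = replicate p ox @ [oy] @ replicate q ox"
  shows "U w = 0"
  using assms by (simp add: U_def)

lemma signed_binomial_div_fact:
  assumes "p \<le> m"
  shows "((-1)^(m-p) / (fact p * fact (m-p)) :: 'a::field_char_0)
       = 1 / fact m * of_int ((-1)^(m-p) * int (m choose p))"
  using binomial_fact[OF assms, where 'a='a] by (simp add: field_simps)

lemma fps_const_X_power_mult:
  "(fps_const a * fps_X ^ k) * (fps_const c * fps_X ^ s)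
     = fps_const (a * c) * (fps_X ^ (k + s) :: 'a::ring_1 fps)"
proof -
  have "(fps_const a * fps_X ^ k) * (fps_const c * fps_X ^ s)
      = fps_const a * (fps_X ^ k * fps_const c) * fps_X ^ s"
    by (simp only: mult.assoc)
  also have "\<dots> = fps_const a * (fps_const c * fps_X ^ k) * fps_X ^ s"
    by (simp only: fps_mult_fps_X_power_commute)
  also have "\<dots> = fps_const (a * c) * fps_X ^ (k + s)"
    by (simp only: mult.assoc power_add fps_const_mult[symmetric])
  finally show ?thesis .
qed

lemma comould_monomial:
  assumes "\<And>m. C m = fps_const (c m) * fps_X ^ e m"
  shows "comould C w = fps_const (prod_list (map c w)) * fps_X ^ sum_list (map e w)"
  by (induction w) (simp_all add: comould_def assms fps_const_X_power_mult)

lemma fps_tsum_nth: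
  assumes "finite S" "S \<subseteq> W" "\<And>w. w \<in> W - S \<Longrightarrow> fps_nth (F w) n = 0"
  shows "fps_nth (fps_tsum F W) n = (\<Sum>w\<in>S. fps_nth (F w) n)"
proof -
  have "{w \<in> W. fps_nth (F w) n \<noteq> 0} \<subseteq> S" using assms(3) by blast
  then have "(\<Sum>w\<in>{w \<in> W. fps_nth (F w) n \<noteq> 0}. fps_nth (F w) n) = (\<Sum>w\<in>S. fps_nth (F w) n)"
    by (rule sum.mono_neutral_left[OF assms(1)]) (use assms(2) in blast)
  then show ?thesis
    unfolding fps_tsum_def by simp
qed

lemma (in scalar_algebra) mould_apply_monomial_nth:
  assumes "\<And>m. C m = fps_const (c m) * fps_X ^ e m"
    and "finite {w \<in> W. sum_list (map e w) = n}"
  shows "fps_nth (mould_apply sc M C W) n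
       = (\<Sum>w \<in> {w \<in> W. sum_list (map e w) = n}. sc (of_rat (M w)) (prod_list (map c w)))"
proof -
  have coeff: "fps_nth (comould C w) k
                 = (if k = sum_list (map e w) then prod_list (map c w) else 0)" for w k
    unfolding comould_monomial[OF assms(1)] fps_X_power_mult_right_nth by simp
  have "fps_nth (mould_apply sc M C W) n = (\<Sum>w \<in> {w \<in> W. sum_list (map e w) = n}.
          fps_nth (Abs_fps (\<lambda>k. sc (of_rat (M w)) (fps_nth (comould C w) k))) n)"
    unfolding mould_apply_def by (rule fps_tsum_nth[OF assms(2)]) (auto simp: coeff)
  also have "\<dots> = (\<Sum>w \<in> {w \<in> W. sum_list (map e w) = n}. sc (of_rat (M w)) (prod_list (map c w)))"
    by (rule sum.cong) (simp_all add: coeff)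
  finally show ?thesis .
qed

locale xy_algebra = scalar_algebra sc for sc :: "'k::field_char_0 \<Rightarrow> 'a::ring_1 \<Rightarrow> 'a" +
  fixes X Y :: 'a
begin

definition letter :: "omega \<Rightarrow> 'a" where
  "letter c = (case c of ox \<Rightarrow> X | oy \<Rightarrow> Y)"

definition D_coeff :: "nat \<Rightarrow> 'a" where
  "D_coeff n = sc (of_rat (1 / fact (n - 1))) ((ad X ^^ (n - 1)) (X + Y))"

definition B_nth :: "(omega list \<Rightarrow> rat) \<Rightarrow> nat \<Rightarrow> 'a" where
  "B_nth V n = (\<Sum>u | length u = n. sc (of_rat (V u)) (prod_list (map letter u)))"

definition D_nth :: "(nat list \<Rightarrow> rat) \<Rightarrow> nat \<Rightarrow> 'a" where
  "D_nth M n = (\<Sum>w\<in>compositions n. sc (of_rat (M w)) (prod_list (map D_coeff w)))"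

lemma Dgen_eq: "Dgen sc X Y n = fps_const (D_coeff n) * fps_X ^ n"
  unfolding Dgen_def D_coeff_def ..

lemma Bgen_eq: "Bgen X Y c = fps_const (letter c) * fps_X ^ 1"
  by (cases c) (simp_all add: Bgen_def letter_def)

lemma mould_apply_D_nth: "fps_nth (mould_apply sc M (Dgen sc X Y) (lists {1..})) n = D_nth M n"
proof -
  have "fps_nth (mould_apply sc M (Dgen sc X Y) (lists {1..})) n
      = (\<Sum>w \<in> {w \<in> lists {1..}. sum_list (map (\<lambda>k. k) w) = n}.
           sc (of_rat (M w)) (prod_list (map D_coeff w)))"
    using finite_compositions[of n]
    by (intro mould_apply_monomial_nth Dgen_eq) (simp add: compositions_def)
  then show ?thesis
    by (simp add: D_nth_def compositions_def)
qed

lemma mould_apply_B_nth: "fps_nth (mould_apply sc V (Bgen X Y) UNIV) n = B_nth V n"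
proof -
  have "fps_nth (mould_apply sc V (Bgen X Y) UNIV) n
      = (\<Sum>u \<in> {u \<in> UNIV. sum_list (map (\<lambda>_. 1) u) = n}.
           sc (of_rat (V u)) (prod_list (map letter u)))"
    using finite_words_length[of n]
    by (intro mould_apply_monomial_nth Bgen_eq) (simp add: sum_list_triv)
  then show ?thesis
    by (simp add: B_nth_def sum_list_triv)
qed

lemma B_nth_U_1: "B_nth U 1 = D_coeff 1"
proof -
  have "{u :: omega list. length u = 1} = {[ox], [oy]}"
    by (auto simp: length_Suc_conv intro: omega.exhaust)
  then show ?thesis
    by (simp add: B_nth_def D_coeff_def U_x U_y scale_one letter_def)
qed

lemma B_nth_U_Suc:
  assumes "m \<ge> 1"
  shows "B_nth U (Suc m) = D_coeff (Suc m)"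
proof -
  define xyx where "xyx p = replicate p ox @ [oy] @ replicate (m - p) ox" for p
  have support: "U u = 0" if "u \<in> {u. length u = Suc m} - xyx ` {..m}" for u
  proof (rule U_eq_0)
    show "u \<noteq> [ox]" using that assms by auto
    show "\<nexists>p q. u = replicate p ox @ [oy] @ replicate q ox"
      using that by (force simp: xyx_def)
  qed
  have "B_nth U (Suc m) = (\<Sum>u\<in>xyx ` {..m}. sc (of_rat (U u)) (prod_list (map letter u)))"
    unfolding B_nth_def using support
    by (intro sum.mono_neutral_right finite_words_length) (auto simp: xyx_def)
  also have "\<dots> = (\<Sum>p\<le>m. sc (of_rat (U (xyx p))) (prod_list (map letter (xyx p))))"
    by (rule sum.reindex_cong[OF _ refl refl], rule inj_onI)
      (auto simp: xyx_def dest: replicate_oy_replicate_inj)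
  also have "\<dots> = (\<Sum>p\<le>m. sc (of_rat (1 / fact m))
                    (of_int ((-1)^(m-p) * int (m choose p)) * (X^p * Y * X^(m-p))))"
  proof (rule sum.cong)
    fix p assume "p \<in> {..m}"
    then have "U (xyx p) = 1 / fact m * of_int ((-1)^(m-p) * int (m choose p))"
      unfolding xyx_def U_x_power_y_x_power by (simp add: signed_binomial_div_fact)
    moreover have "prod_list (map letter (xyx p)) = X^p * Y * X^(m-p)"
      by (simp add: xyx_def letter_def mult.assoc)
    ultimately show "sc (of_rat (U (xyx p))) (prod_list (map letter (xyx p)))
      = sc (of_rat (1 / fact m)) (of_int ((-1)^(m-p) * int (m choose p)) * (X^p * Y * X^(m-p)))"
      by (simp only: of_rat_mult of_rat_of_int_eq scale_scale scale_of_int)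
  qed simp
  also have "\<dots> = sc (of_rat (1 / fact m)) ((ad X ^^ m) Y)"
    by (simp add: scale_sum_right ad_iterate_expansion)
  also have "\<dots> = D_coeff (Suc m)"
    using assms by (simp add: D_coeff_def ad_iterate_add ad_iterate_self)
  finally show ?thesis .
qed

lemma B_nth_U:
  assumes "k \<ge> 1"
  shows "B_nth U k = D_coeff k"
proof (cases "k = 1")
  case False
  with assms obtain m where "k = Suc m" "m \<ge> 1" by (cases k) auto
  then show ?thesis by (simp add: B_nth_U_Suc)
qed (simp only: B_nth_U_1)

lemma D_nth_0: "D_nth M 0 = sc (of_rat (M [])) 1"
  by (simp add: D_nth_def compositions_0)

lemma B_nth_odot_0: "B_nth (odot M V) 0 = sc (of_rat (M [])) 1"
  by (simp add: B_nth_def odot_def)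

lemma D_nth_first:
  assumes "n > 0"
  shows "D_nth M n = (\<Sum>k\<in>{1..n}. D_coeff k * D_nth (\<lambda>v. M (k # v)) (n - k))"
proof -
  have "D_nth M n = (\<Sum>(k, w)\<in>(SIGMA k:{1..n}. compositions (n - k)).
                       sc (of_rat (M (k # w))) (D_coeff k * prod_list (map D_coeff w)))"
    unfolding D_nth_def sum.reindex_bij_betw[OF bij_betw_compositions_first[OF assms], symmetric]
    by (simp add: case_prod_beta)
  also have "\<dots> = (\<Sum>k\<in>{1..n}. D_coeff k * D_nth (\<lambda>v. M (k # v)) (n - k))"
    by (simp add: sum.Sigma[symmetric] finite_compositions D_nth_def sum_distrib_left
        scale_mult_right)
  finally show ?thesis .
qed

lemma B_nth_odot_first:
  assumes "n > 0"
  shows "B_nth (odot M V) n = (\<Sum>k\<in>{1..n}. B_nth V k * B_nth (odot (\<lambda>v. M (k # v)) V) (n - k))"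
proof -
  define g where "g k x y = sc (of_rat (V x)) (prod_list (map letter x))
                          * sc (of_rat (odot (\<lambda>v. M (k # v)) V y)) (prod_list (map letter y))"
    for k x y
  have "B_nth (odot M V) n = (\<Sum>u | length u = n. \<Sum>k\<in>{1..n}. g k (take k u) (drop k u))"
    unfolding B_nth_def
  proof (rule sum.cong)
    fix u :: "omega list" assume "u \<in> {u. length u = n}"
    with assms have length: "length u = n" and nonempty: "u \<noteq> []" by auto
    have split: "prod_list (map letter (take k u)) * prod_list (map letter (drop k u))
                   = prod_list (map letter u)" for k
      by (metis append_take_drop_id map_append prod_list.append)
    show "sc (of_rat (odot M V u)) (prod_list (map letter u))
          = (\<Sum>k\<in>{1..n}. g k (take k u) (drop k u))"
      by (simp only: odot_first_factor[OF nonempty] length of_rat_sum scale_sum_left of_rat_mult g_def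
          split flip: scale_mult_mult)
  qed simp
  also have "\<dots> = (\<Sum>k\<in>{1..n}. \<Sum>x | length x = k. \<Sum>y | length y = n - k. g k x y)"
    by (subst sum.swap) (simp add: sum_words_split)
  also have "\<dots> = (\<Sum>k\<in>{1..n}. B_nth V k * B_nth (odot (\<lambda>v. M (k # v)) V) (n - k))"
    by (simp add: B_nth_def g_def sum_product)
  finally show ?thesis .
qed

lemma D_nth_eq_B_nth_odot: "D_nth M n = B_nth (odot M U) n"
proof (induction n arbitrary: M rule: less_induct)
  case (less n)
  show ?case
  proof (cases "n = 0")
    case False
    then show ?thesis
      using less.IH by (simp add: D_nth_first B_nth_odot_first B_nth_U)
  qed (simp add: D_nth_0 B_nth_odot_0)
qed

end

theorem theorem5p1:
  fixes sc :: "'k::field_char_0 \<Rightarrow> 'a::ring_1 \<Rightarrow> 'a"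
    and X Y :: 'a
    and M :: "nat list \<Rightarrow> rat"
  assumes "is_algebra sc"
  shows "mould_apply sc M (Dgen sc X Y) (lists {1..})
           = mould_apply sc (odot M U) (Bgen X Y) UNIV"
proof -
  interpret xy_algebra sc X Y
    by unfold_locales (rule assms)
  show ?thesis
    by (rule fps_ext) (simp only: mould_apply_D_nth mould_apply_B_nth D_nth_eq_B_nth_odot)
qed

end
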